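(* Let $X$ be a topological large scale space whose topology is Hausdorff. Then $X\cup \mathrm{Ends}(X)$, with the topology $\mathcal T_{end}$ described in the context, is a large scale compactification of $X$. Furthermore, $\mathrm{Ends}(X)$ is a compact, totally disconnected subspace of $X\cup\mathrm{Ends}(X)$.
   Context: A large scale space is a set $X$ with a family $\mathbb{LSS}$ of covers of $X$ (called uniformly bounded covers) such that (1) $st(\mathcal U,\mathcal V)\in\mathbb{LSS}$ whenever $\mathcal U,\mathcal V\in\mathbb{LSS}$, and (2) if $\mathcal U\in\mathbb{LSS}$ and $\mathcal V$ is a cover of $X$ each of whose elements is contained in some element of $\mathcal U$, then $\mathcal V\in\mathbb{LSS}$. Here $st(x,\mathcal U)$ is the union of all elements of $\mathcal U$ containing $x$, $st(A,\mathcal U)=\bigcup_{x\in A}st(x,\mathcal U)$, and $st(\mathcal U,\mathcal V)=\{st(A,\mathcal V):A\in\mathcal U\}$. A subset of $X$ is bounded if it is contained in an element of some uniformly bounded cover. Standing assumption: the union of two bounded subsets is bounded. A subset $A\subseteq X$ is coarsely clopen if for every uniformly bounded cover $\mathcal U$ the set $st(A,\mathcal U)\cap st(X\setminus A,\mathcal U)$ is bounded. An end of $X$ is a family $E$ of unbounded coarsely clopen subsets of $X$ that is maximal with respect to the property that all finite intersections of its members are unbounded; $\mathrm{Ends}(X)$ is the set of ends. A topological large scale space is a large scale space (with the standing assumption) equipped with a topology $\mathcal T$ such that some uniformly bounded cover consists of open sets. For a coarsely clopen $U$ put $U_{end}=\{E\in\mathrm{Ends}(X):U\in E\}$ and $\tilde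 U_{end}=U\cup U_{end}$. The topology $\mathcal T_{end}$ on $X\cup\mathrm{Ends}(X)$ is the one with basis $\mathcal T\cup\{\tilde U_{end}: U \text{ an open coarsely clopen subset of } X\}$; it extends $\mathcal T$, and $\mathrm{Ends}(X)$ carries the subspace topology. A topological space $Y$ containing $X$ as a subspace is large scale compact if for every open cover $\{U_s\}_{s\in S}$ of $Y$ there is a finite $F\subseteq S$ such that $Y\setminus\bigcup_{s\in F}U_s$ is a bounded subset of $X$; $Y$ is a large scale compactification of $X$ if it is large scale compact, Hausdorff, and $X$ is an open dense subspace of $Y$. *)

theory Defs
  imports "HOL-Analysis.Analysis"
begin

definition is_cover :: "'a set \<Rightarrow> 'a set set \<Rightarrow> bool" where
  "is_cover X \<U> \<longleftrightarrow> (\<forall>U\<in>\<U>. U \<subseteq> X) \<and> \<Union>\<U> = X"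

definition st_pt :: "'a \<Rightarrow> 'a set set \<Rightarrow> 'a set" where
  "st_pt x \<U> = \<Union>{U\<in>\<U>. x \<in> U}"

definition st_set :: "'a set \<Rightarrow> 'a set set \<Rightarrow> 'a set" where
  "st_set A \<U> = (\<Union>x\<in>A. st_pt x \<U>)"

definition st_cov :: "'a set set \<Rightarrow> 'a set set \<Rightarrow> 'a set set" where
  "st_cov \<U> \<V> = {st_set A \<V> | A. A \<in> \<U>}"

definition large_scale_space :: "'a set \<Rightarrow> 'a set set set \<Rightarrow> bool" where
  "large_scale_space X LSS \<longleftrightarrow>
     (\<forall>\<U>\<in>LSS. is_cover X \<U>) \<and>
     (\<forall>\<U>\<in>LSS. \<forall>\<V>\<in>LSS. st_cov \<U> \<V> \<in> LSS) \<and>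
     (\<forall>\<U>\<in>LSS. \<forall>\<V>. is_cover X \<V> \<and> (\<forall>V\<in>\<V>. \<exists>U\<in>\<U>. V \<subseteq> U) \<longrightarrow> \<V> \<in> LSS)"

definition ls_bounded :: "'a set \<Rightarrow> 'a set set set \<Rightarrow> 'a set \<Rightarrow> bool" where
  "ls_bounded X LSS B \<longleftrightarrow> B \<subseteq> X \<and> (B = {} \<or> (\<exists>\<U>\<in>LSS. \<exists>U\<in>\<U>. B \<subseteq> U))"

definition bounded_union_closed :: "'a set \<Rightarrow> 'a set set set \<Rightarrow> bool" where
  "bounded_union_closed X LSS \<longleftrightarrow>
     (\<forall>A B. ls_bounded X LSS A \<and> ls_bounded X LSS B \<longrightarrow> ls_bounded X LSS (A \<union> B))"

definition coarsely_clopen :: "'a set \<Rightarrow> 'a set set set \<Rightarrow> 'a set \<Rightarrow> bool" where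
  "coarsely_clopen X LSS A \<longleftrightarrow> A \<subseteq> X \<and>
     (\<forall>\<U>\<in>LSS. ls_bounded X LSS (st_set A \<U> \<inter> st_set (X - A) \<U>))"

definition end_family :: "'a set \<Rightarrow> 'a set set set \<Rightarrow> 'a set set \<Rightarrow> bool" where
  "end_family X LSS \<E> \<longleftrightarrow>
     (\<forall>A\<in>\<E>. coarsely_clopen X LSS A \<and> \<not> ls_bounded X LSS A) \<and>
     (\<forall>\<F>. \<F> \<subseteq> \<E> \<and> finite \<F> \<longrightarrow> \<not> ls_bounded X LSS (X \<inter> \<Inter>\<F>))"

definition is_end :: "'a set \<Rightarrow> 'a set set set \<Rightarrow> 'a set set \<Rightarrow> bool" where
  "is_end X LSS \<E> \<longleftrightarrow> end_family X LSS \<E> \<and>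
     (\<forall>\<E>'. \<E> \<subseteq> \<E>' \<and> end_family X LSS \<E>' \<longrightarrow> \<E>' = \<E>)"

definition Ends :: "'a set \<Rightarrow> 'a set set set \<Rightarrow> 'a set set set" where
  "Ends X LSS = {\<E>. is_end X LSS \<E>}"

definition top_large_scale_space :: "'a set \<Rightarrow> 'a set set set \<Rightarrow> 'a topology \<Rightarrow> bool" where
  "top_large_scale_space X LSS T \<longleftrightarrow> large_scale_space X LSS \<and> bounded_union_closed X LSS \<and>
     topspace T = X \<and> (\<exists>\<U>\<in>LSS. \<forall>U\<in>\<U>. openin T U)"

text \<open>The space X \<union> Ends(X) is modelled on the sum type: points of X are Inl x, ends are Inr E.\<close>
definition end_basis :: "'a set \<Rightarrow> 'a set set set \<Rightarrow> 'a topology \<Rightarrow> ('a + 'a set set) set set" where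
  "end_basis X LSS T =
     {Inl ` U | U. openin T U} \<union>
     {Inl ` U \<union> Inr ` {\<E> \<in> Ends X LSS. U \<in> \<E>} | U. openin T U \<and> coarsely_clopen X LSS U}"

definition T_end :: "'a set \<Rightarrow> 'a set set set \<Rightarrow> 'a topology \<Rightarrow> ('a + 'a set set) topology" where
  "T_end X LSS T = topology_generated_by (end_basis X LSS T)"

definition ls_compact :: "'b topology \<Rightarrow> 'a set \<Rightarrow> 'a set set set \<Rightarrow> ('a \<Rightarrow> 'b) \<Rightarrow> bool" where
  "ls_compact Y X LSS e \<longleftrightarrow>
     (\<forall>\<U>. (\<forall>U\<in>\<U>. openin Y U) \<and> topspace Y \<subseteq> \<Union>\<U> \<longrightarrow>
        (\<exists>\<F>. \<F> \<subseteq> \<U> \<and> finite \<F> \<and>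
           (\<exists>B. ls_bounded X LSS B \<and> topspace Y - \<Union>\<F> = e ` B)))"

definition ls_compactification ::
  "'b topology \<Rightarrow> 'a set \<Rightarrow> 'a set set set \<Rightarrow> 'a topology \<Rightarrow> ('a \<Rightarrow> 'b) \<Rightarrow> bool" where
  "ls_compactification Y X LSS T e \<longleftrightarrow>
     ls_compact Y X LSS e \<and> Hausdorff_space Y \<and>
     embedding_map T Y e \<and> openin Y (e ` X) \<and> Y closure_of (e ` X) = topspace Y"

definition totally_disconnected_space :: "'a topology \<Rightarrow> bool" where
  "totally_disconnected_space Y \<longleftrightarrow> (\<forall>S. connectedin Y S \<longrightarrow> (\<exists>a. S \<subseteq> {a}))"

end

theory Submission
  imports Defs
begin

text \<open>Ends behave like ultrafilters on the coarsely clopen sets modulo bounded sets: an end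
  contains exactly one of \<open>A\<close> and \<open>X - A\<close>, and it is closed under finite intersections and
  under changes by bounded sets. Because some uniformly bounded cover consists of open sets,
  every coarsely clopen set agrees with an open one up to a bounded set, so two distinct ends
  are separated by the basic open sets of complementary coarsely clopen sets; this yields the
  Hausdorff property and the total disconnectedness of the space of ends. Large scale
  compactness comes from Zorn's lemma: if no finitely many of the basic neighbourhoods chosen
  in an open cover covered \<open>X\<close> up to a bounded set, their complements would extend to an end
  avoiding its own chosen neighbourhood.\<close>

lemma mem_Ends_iff: "E \<in> Ends X LSS \<longleftrightarrow> is_end X LSS E"
  by (simp add: Ends_def)

lemma openin_st_set: "(\<And>U. U \<in> \<U> \<Longrightarrow> openin T U) \<Longrightarrow> openin T (st_set A \<U>)"
  unfolding st_set_def st_pt_def by (intro openin_Union) auto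

locale ls_space =
  fixes X :: "'a set" and LSS :: "'a set set set"
  assumes large_scale: "large_scale_space X LSS"
    and bounded_Un_closed: "bounded_union_closed X LSS"
begin

abbreviation "bnd \<equiv> ls_bounded X LSS"
abbreviation "cc \<equiv> coarsely_clopen X LSS"

lemma is_cover_LSS: "\<U> \<in> LSS \<Longrightarrow> is_cover X \<U>"
  using large_scale unfolding large_scale_space_def by blast

lemma st_cov_LSS: "\<U> \<in> LSS \<Longrightarrow> \<V> \<in> LSS \<Longrightarrow> st_cov \<U> \<V> \<in> LSS"
  using large_scale unfolding large_scale_space_def by blast

lemma bounded_subset: "bnd B \<Longrightarrow> C \<subseteq> B \<Longrightarrow> bnd C"
  unfolding ls_bounded_def by (metis subset_empty subset_trans)

lemma bounded_Un: "bnd A \<Longrightarrow> bnd B \<Longrightarrow> bnd (A \<union> B)"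
  using bounded_Un_closed unfolding bounded_union_closed_def by simp

lemma bounded_empty [simp]: "bnd {}"
  by (simp add: ls_bounded_def)

lemma bounded_member: "\<U> \<in> LSS \<Longrightarrow> U \<in> \<U> \<Longrightarrow> bnd U"
  using is_cover_LSS unfolding ls_bounded_def is_cover_def by blast

lemma st_set_mono: "A \<subseteq> B \<Longrightarrow> st_set A \<V> \<subseteq> st_set B \<V>"
  unfolding st_set_def by blast

lemma st_set_Un: "st_set (A \<union> B) \<V> = st_set A \<V> \<union> st_set B \<V>"
  unfolding st_set_def by blast

lemma st_set_empty [simp]: "st_set {} \<V> = {}"
  unfolding st_set_def by blast

lemma st_set_subset: "\<V> \<in> LSS \<Longrightarrow> st_set A \<V> \<subseteq> X"
  using is_cover_LSS[of \<V>] unfolding st_set_def st_pt_def is_cover_def by blast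

lemma subset_st_set: "\<V> \<in> LSS \<Longrightarrow> A \<subseteq> X \<Longrightarrow> A \<subseteq> st_set A \<V>"
  using is_cover_LSS[of \<V>] unfolding st_set_def st_pt_def is_cover_def by blast

lemma bounded_st_set:
  assumes "bnd B" "\<V> \<in> LSS"
  shows "bnd (st_set B \<V>)"
proof (cases "B = {}")
  case False
  then obtain \<U> U where U: "\<U> \<in> LSS" "U \<in> \<U>" "B \<subseteq> U"
    using assms(1) unfolding ls_bounded_def by blast
  then have cov: "st_cov \<U> \<V> \<in> LSS" and mem: "st_set U \<V> \<in> st_cov \<U> \<V>"
    using st_cov_LSS assms(2) unfolding st_cov_def by blast+
  have "st_set B \<V> \<subseteq> st_set U \<V>"
    by (rule st_set_mono[OF U(3)])
  with cov mem show ?thesis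
    unfolding ls_bounded_def using st_set_subset[OF assms(2)] by blast
qed simp

lemma coarsely_clopen_subset: "cc A \<Longrightarrow> A \<subseteq> X"
  by (simp add: coarsely_clopen_def)

lemma coarsely_clopen_space: "cc X"
  unfolding coarsely_clopen_def by simp

lemma coarsely_clopen_Diff: "cc A \<Longrightarrow> cc (X - A)"
  using double_diff[of A X X] unfolding coarsely_clopen_def by (simp add: Int_commute)

lemma coarsely_clopen_Int:
  assumes "cc A" "cc B"
  shows "cc (A \<inter> B)"
  unfolding coarsely_clopen_def
proof (intro conjI ballI)
  show "A \<inter> B \<subseteq> X"
    using assms coarsely_clopen_subset by blast
  fix \<U> assume "\<U> \<in> LSS"
  then have "bnd ((st_set A \<U> \<inter> st_set (X - A) \<U>) \<union> (st_set B \<U> \<inter> st_set (X - B) \<U>))"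
    using assms unfolding coarsely_clopen_def by (blast intro: bounded_Un)
  moreover have "X - A \<inter> B = (X - A) \<union> (X - B)"
    by blast
  then have "st_set (A \<inter> B) \<U> \<inter> st_set (X - A \<inter> B) \<U> \<subseteq>
      (st_set A \<U> \<inter> st_set (X - A) \<U>) \<union> (st_set B \<U> \<inter> st_set (X - B) \<U>)"
    using st_set_mono[of "A \<inter> B" A \<U>] st_set_mono[of "A \<inter> B" B \<U>] st_set_Un[of "X - A" "X - B" \<U>]
    by auto
  ultimately show "bnd (st_set (A \<inter> B) \<U> \<inter> st_set (X - A \<inter> B) \<U>)"
    using bounded_subset by blast
qed

lemma coarsely_clopen_bounded_change:
  assumes "cc A" "bnd C" "B \<subseteq> X" "B - C \<subseteq> A" "A - C \<subseteq> B"
  shows "cc B"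
  unfolding coarsely_clopen_def
proof (intro conjI ballI)
  show "B \<subseteq> X" by fact
  fix \<U> assume "\<U> \<in> LSS"
  then have "bnd ((st_set A \<U> \<inter> st_set (X - A) \<U>) \<union> st_set C \<U>)"
    using assms unfolding coarsely_clopen_def by (blast intro: bounded_Un bounded_st_set)
  moreover have "st_set B \<U> \<subseteq> st_set A \<U> \<union> st_set C \<U>"
    using st_set_mono[of B "A \<union> C" \<U>] st_set_Un[of A C \<U>] assms by blast
  moreover have "st_set (X - B) \<U> \<subseteq> st_set (X - A) \<U> \<union> st_set C \<U>"
    using st_set_mono[of "X - B" "(X - A) \<union> C" \<U>] st_set_Un[of "X - A" C \<U>] assms by blast
  ultimately show "bnd (st_set B \<U> \<inter> st_set (X - B) \<U>)"
    by (elim bounded_subset) blast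
qed

lemma coarsely_clopen_Diff_bounded:
  assumes "cc A" "bnd C"
  shows "cc (A - C)"
  by (rule coarsely_clopen_bounded_change[OF assms]) (use coarsely_clopen_subset[OF assms(1)] in auto)

section \<open>Ends\<close>

lemma end_mem_coarsely_clopen: "E \<in> Ends X LSS \<Longrightarrow> A \<in> E \<Longrightarrow> cc A"
  unfolding mem_Ends_iff is_end_def end_family_def by blast

lemma end_mem_unbounded: "E \<in> Ends X LSS \<Longrightarrow> A \<in> E \<Longrightarrow> \<not> bnd A"
  unfolding mem_Ends_iff is_end_def end_family_def by blast

lemma end_Inter_unbounded: "E \<in> Ends X LSS \<Longrightarrow> finite \<F> \<Longrightarrow> \<F> \<subseteq> E \<Longrightarrow> \<not> bnd (X \<inter> \<Inter>\<F>)"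
  unfolding mem_Ends_iff is_end_def end_family_def by blast

lemma end_memI:
  assumes E: "E \<in> Ends X LSS" and A: "cc A"
    and unbounded: "\<And>\<F>. finite \<F> \<Longrightarrow> \<F> \<subseteq> E \<Longrightarrow> \<not> bnd (X \<inter> \<Inter>\<F> \<inter> A)"
  shows "A \<in> E"
proof -
  have "X \<inter> \<Inter>{} \<inter> A = A"
    using coarsely_clopen_subset[OF A] by blast
  then have "\<not> bnd A"
    using unbounded[of "{}"] by simp
  have "end_family X LSS (insert A E)"
    unfolding end_family_def
  proof (rule conjI; intro allI impI ballI)
    fix B assume "B \<in> insert A E"
    then show "cc B \<and> \<not> bnd B"
      using A \<open>\<not> bnd A\<close> end_mem_coarsely_clopen end_mem_unbounded E by auto
  next
    fix \<F> assume \<F>: "\<F> \<subseteq> insert A E \<and> finite \<F>"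
    show "\<not> bnd (X \<inter> \<Inter>\<F>)"
    proof (cases "A \<in> \<F>")
      case True
      then have "X \<inter> \<Inter>\<F> = X \<inter> \<Inter>(\<F> - {A}) \<inter> A"
        by blast
      then show ?thesis
        using unbounded[of "\<F> - {A}"] \<F> by auto
    qed (use end_Inter_unbounded[OF E, of \<F>] \<F> in blast)
  qed
  then show ?thesis
    using E unfolding mem_Ends_iff is_end_def by blast
qed

lemma end_mem_or_Diff_mem:
  assumes E: "E \<in> Ends X LSS" and A: "cc A"
  shows "A \<in> E \<or> X - A \<in> E"
proof (rule ccontr)
  assume "\<not> (A \<in> E \<or> X - A \<in> E)"
  then obtain \<F>1 \<F>2 where
    \<F>1: "finite \<F>1" "\<F>1 \<subseteq> E" "bnd (X \<inter> \<Inter>\<F>1 \<inter> A)" and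
    \<F>2: "finite \<F>2" "\<F>2 \<subseteq> E" "bnd (X \<inter> \<Inter>\<F>2 \<inter> (X - A))"
    using end_memI[OF E A] end_memI[OF E coarsely_clopen_Diff[OF A]] by blast
  have "X \<inter> \<Inter>(\<F>1 \<union> \<F>2) \<subseteq> (X \<inter> \<Inter>\<F>1 \<inter> A) \<union> (X \<inter> \<Inter>\<F>2 \<inter> (X - A))"
    by blast
  then have "bnd (X \<inter> \<Inter>(\<F>1 \<union> \<F>2))"
    by (rule bounded_subset[OF bounded_Un[OF \<F>1(3) \<F>2(3)]])
  moreover have "\<not> bnd (X \<inter> \<Inter>(\<F>1 \<union> \<F>2))"
    using end_Inter_unbounded[OF E] \<F>1 \<F>2 by simp
  ultimately show False
    by contradiction
qed

lemma end_Int_unbounded: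
  assumes "E \<in> Ends X LSS" "A \<in> E" "B \<in> E"
  shows "\<not> bnd (A \<inter> B)"
proof -
  have "X \<inter> \<Inter>{A, B} = A \<inter> B"
    using coarsely_clopen_subset end_mem_coarsely_clopen assms by blast
  then show ?thesis
    using end_Inter_unbounded[OF assms(1), of "{A, B}"] assms by auto
qed

lemma end_mem_bounded_change:
  assumes E: "E \<in> Ends X LSS" "A \<in> E" and B: "cc B" and C: "bnd C" "A - C \<subseteq> B"
  shows "B \<in> E"
proof -
  have "X - B \<notin> E"
  proof
    assume "X - B \<in> E"
    then have "\<not> bnd (A \<inter> (X - B))"
      using end_Int_unbounded E by blast
    moreover have "A \<inter> (X - B) \<subseteq> C"
      using C(2) by blast
    ultimately show False
      using bounded_subset[OF C(1)] by blast
  qed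
  then show ?thesis
    using end_mem_or_Diff_mem[OF E(1) B] by blast
qed

lemma end_mem_mono: "E \<in> Ends X LSS \<Longrightarrow> A \<in> E \<Longrightarrow> A \<subseteq> B \<Longrightarrow> cc B \<Longrightarrow> B \<in> E"
  using end_mem_bounded_change[of E A B "{}"] by simp

lemma end_Int_mem:
  assumes E: "E \<in> Ends X LSS" and "A \<in> E" "B \<in> E"
  shows "A \<inter> B \<in> E"
proof -
  have "X \<inter> \<Inter>{A, B, X - A \<inter> B} = {}"
    by blast
  then have "X - A \<inter> B \<notin> E"
    using end_Inter_unbounded[OF E, of "{A, B, X - A \<inter> B}"] assms by auto
  then show ?thesis
    using end_mem_or_Diff_mem[OF E coarsely_clopen_Int] end_mem_coarsely_clopen assms by blast
qed

lemma space_mem_end: "E \<in> Ends X LSS \<Longrightarrow> X \<in> E"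
  using end_mem_or_Diff_mem[OF _ coarsely_clopen_space] end_mem_unbounded by fastforce

lemma end_family_imp_end:
  assumes "end_family X LSS \<G>"
  shows "\<exists>E \<in> Ends X LSS. \<G> \<subseteq> E"
proof -
  let ?A = "{E. end_family X LSS E \<and> \<G> \<subseteq> E}"
  have "\<exists>M\<in>?A. \<forall>E\<in>?A. M \<subseteq> E \<longrightarrow> E = M"
  proof (rule subset_Zorn_nonempty)
    fix \<C> assume \<C>: "\<C> \<noteq> {}" "subset.chain ?A \<C>"
    then have \<C>A: "\<C> \<subseteq> ?A"
      by (simp add: subset.chain_def)
    have "end_family X LSS (\<Union>\<C>)"
      unfolding end_family_def
    proof (rule conjI; intro allI impI ballI)
      fix A assume "A \<in> \<Union>\<C>"
      then show "cc A \<and> \<not> bnd A"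
        using \<C>A unfolding end_family_def by blast
    next
      fix \<F> assume \<F>: "\<F> \<subseteq> \<Union>\<C> \<and> finite \<F>"
      then obtain E where "E \<in> \<C>" "\<F> \<subseteq> E"
        using finite_subset_Union_chain[of \<F> \<C> ?A] \<C> by blast
      then show "\<not> bnd (X \<inter> \<Inter>\<F>)"
        using \<C>A \<F> unfolding end_family_def by blast
    qed
    then show "\<Union>\<C> \<in> ?A"
      using \<C> \<C>A by blast
  qed (use assms in blast)
  then obtain M where "M \<in> ?A" "\<forall>E\<in>?A. M \<subseteq> E \<longrightarrow> E = M"
    by blast
  then have "M \<in> Ends X LSS" "\<G> \<subseteq> M"
    unfolding mem_Ends_iff is_end_def by blast+
  then show ?thesis
    by blast
qed

lemma end_mem_of_cobounded_cover:
  assumes E: "E \<in> Ends X LSS" and "finite \<A>" "\<forall>A\<in>\<A>. cc A" "bnd (X - \<Union>\<A>)"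
  shows "\<exists>A\<in>\<A>. A \<in> E"
proof (rule ccontr)
  assume "\<not> ?thesis"
  then have "(\<lambda>A. X - A) ` \<A> \<subseteq> E"
    using end_mem_or_Diff_mem[OF E] assms(3) by blast
  then have "\<not> bnd (X \<inter> \<Inter>((\<lambda>A. X - A) ` \<A>))"
    by (rule end_Inter_unbounded[OF E finite_imageI[OF assms(2)]])
  moreover have "X \<inter> \<Inter>((\<lambda>A. X - A) ` \<A>) = X - \<Union>\<A>"
    by blast
  ultimately show False
    using assms(4) by simp
qed

text \<open>The source of compactness: otherwise the complements of the chosen sets form an end family,
  which extends to an end containing the complement of its own chosen set.\<close>

lemma ends_finite_cobounded_choice:
  assumes u: "\<And>E. E \<in> Ends X LSS \<Longrightarrow> cc (u E) \<and> u E \<in> E"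
  shows "\<exists>S. finite S \<and> S \<subseteq> Ends X LSS \<and> bnd (X - \<Union>(u ` S))"
proof (rule ccontr)
  assume none: "\<not> ?thesis"
  let ?\<G> = "(\<lambda>E. X - u E) ` Ends X LSS"
  have "end_family X LSS ?\<G>"
    unfolding end_family_def
  proof (rule conjI; intro allI impI ballI)
    fix A assume "A \<in> ?\<G>"
    then obtain E where E: "E \<in> Ends X LSS" "A = X - u E"
      by blast
    then show "cc A \<and> \<not> bnd A"
      using u coarsely_clopen_Diff none[simplified, rule_format, of "{E}"] by auto
  next
    fix \<F> assume "\<F> \<subseteq> ?\<G> \<and> finite \<F>"
    then obtain S where S: "S \<subseteq> Ends X LSS" "finite S" "\<F> = (\<lambda>E. X - u E) ` S"
      by (meson finite_subset_image)
    then have "X \<inter> \<Inter>\<F> = X - \<Union>(u ` S)"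
      by blast
    then show "\<not> bnd (X \<inter> \<Inter>\<F>)"
      using none S by auto
  qed
  then obtain E where E: "E \<in> Ends X LSS" "?\<G> \<subseteq> E"
    using end_family_imp_end by blast
  then have "\<not> bnd ((X - u E) \<inter> u E)"
    using end_Int_unbounded u by blast
  then show False
    by (simp add: Int_commute)
qed

definition end_nbhd :: "'a set \<Rightarrow> ('a + 'a set set) set" where
  "end_nbhd U = Inl ` U \<union> Inr ` {E \<in> Ends X LSS. U \<in> E}"

lemma end_nbhd_Int:
  assumes "cc U" "cc V"
  shows "end_nbhd (U \<inter> V) = end_nbhd U \<inter> end_nbhd V"
proof -
  have "U \<inter> V \<in> E \<longleftrightarrow> U \<in> E \<and> V \<in> E" if "E \<in> Ends X LSS" for E
    using end_Int_mem end_mem_mono assms that by blast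
  then show ?thesis
    unfolding end_nbhd_def by auto
qed

lemma end_nbhd_empty [simp]: "end_nbhd {} = {}"
  unfolding end_nbhd_def using end_mem_unbounded by fastforce

lemma end_nbhd_disjoint: "cc U \<Longrightarrow> cc V \<Longrightarrow> U \<inter> V = {} \<Longrightarrow> end_nbhd U \<inter> end_nbhd V = {}"
  using end_nbhd_Int by fastforce

end

section \<open>The topology on the space with its ends\<close>

locale top_ls_space = ls_space X LSS for X :: "'a set" and LSS +
  fixes T :: "'a topology"
  assumes topspace_eq: "topspace T = X"
    and open_cover: "\<exists>\<U>\<in>LSS. \<forall>U\<in>\<U>. openin T U"

lemma top_ls_spaceI: "top_large_scale_space X LSS T \<Longrightarrow> top_ls_space X LSS T"
  unfolding top_large_scale_space_def top_ls_space_def top_ls_space_axioms_def ls_space_def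
  by blast

context top_ls_space
begin

lemma openin_subset_space: "openin T U \<Longrightarrow> U \<subseteq> X"
  using openin_subset topspace_eq by blast

lemma bounded_closure_of:
  assumes "bnd D"
  shows "bnd (T closure_of D)"
proof (cases "D = {}")
  case False
  obtain \<U> where \<U>: "\<U> \<in> LSS" "\<forall>U\<in>\<U>. openin T U"
    using open_cover by blast
  obtain \<W> W where W: "\<W> \<in> LSS" "W \<in> \<W>" "D \<subseteq> W"
    using assms False unfolding ls_bounded_def by blast
  have "T closure_of D \<subseteq> st_set W \<U>"
  proof
    fix y assume y: "y \<in> T closure_of D"
    then have "y \<in> X"
      using closure_of_subset_topspace topspace_eq by fastforce
    then obtain V where V: "V \<in> \<U>" "y \<in> V"
      using is_cover_LSS[OF \<U>(1)] unfolding is_cover_def by blast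
    then obtain z where "z \<in> D" "z \<in> V"
      using y \<U>(2) by (auto simp: in_closure_of)
    then show "y \<in> st_set W \<U>"
      using V W(3) unfolding st_set_def st_pt_def by blast
  qed
  then show ?thesis
    using bounded_subset bounded_st_set bounded_member W \<U>(1) by blast
qed simp

text \<open>Removing the closure of the bounded set \<open>st(A, \<U>) \<inter> st(X - A, \<U>)\<close>, for a cover \<open>\<U>\<close> by
  open sets, turns \<open>A\<close> and \<open>X - A\<close> into the open sets \<open>st(A, \<U>) - C\<close> and \<open>st(X - A, \<U>) - C\<close>.\<close>

lemma coarsely_clopen_open_up_to_bounded:
  assumes A: "cc A"
  obtains C where "bnd C" "openin T (A - C)" "openin T (X - A - C)"
proof -
  obtain \<U> where \<U>: "\<U> \<in> LSS" "\<forall>U\<in>\<U>. openin T U"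
    using open_cover by blast
  define D where "D = st_set A \<U> \<inter> st_set (X - A) \<U>"
  define C where "C = T closure_of D"
  have "bnd D"
    using A \<U>(1) unfolding D_def coarsely_clopen_def by blast
  then have "bnd C"
    unfolding C_def by (rule bounded_closure_of)
  have "D \<subseteq> C"
    unfolding C_def D_def using st_set_subset[OF \<U>(1)] topspace_eq
    by (intro closure_of_subset) blast
  then have "st_set A \<U> - C = A - C" "st_set (X - A) \<U> - C = X - A - C"
    using st_set_subset[OF \<U>(1)] subset_st_set[OF \<U>(1)] coarsely_clopen_subset[OF A]
    unfolding D_def by blast+
  moreover have "closedin T C"
    unfolding C_def by simp
  ultimately have "openin T (A - C)" "openin T (X - A - C)"
    using openin_diff openin_st_set \<U>(2) by metis+
  with \<open>bnd C\<close> show ?thesis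
    by (rule that)
qed

abbreviation Y :: "('a + 'a set set) topology" where
  "Y \<equiv> T_end X LSS T"

lemma end_basis_eq:
  "end_basis X LSS T = {Inl ` U | U. openin T U} \<union> {end_nbhd U | U. openin T U \<and> cc U}"
  unfolding end_basis_def end_nbhd_def by (rule refl)

lemma openin_Y_Inl_image: "openin T U \<Longrightarrow> openin Y (Inl ` U)"
  unfolding T_end_def end_basis_eq by (rule topology_generated_by_Basis) blast

lemma openin_Y_end_nbhd: "openin T U \<Longrightarrow> cc U \<Longrightarrow> openin Y (end_nbhd U)"
  unfolding T_end_def end_basis_eq by (rule topology_generated_by_Basis) blast

lemma end_basis_Inl_vimage:
  assumes "b \<in> end_basis X LSS T"
  shows "openin T (Inl -` b)" "Inl ` (Inl -` b) \<subseteq> b"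
proof -
  have "Inl -` end_nbhd U = U" for U
    unfolding end_nbhd_def by auto
  then show "openin T (Inl -` b)"
    using assms unfolding end_basis_eq by (auto simp: inj_vimage_image_eq)
qed auto

lemma end_basis_Inr_mem:
  assumes "b \<in> end_basis X LSS T" "Inr E \<in> b"
  obtains U where "openin T U" "cc U" "E \<in> Ends X LSS" "U \<in> E" "b = end_nbhd U"
  using assms unfolding end_basis_eq end_nbhd_def by blast

lemma end_basis_Int:
  assumes b1: "b1 \<in> end_basis X LSS T" and b2: "b2 \<in> end_basis X LSS T" and p: "p \<in> b1 \<inter> b2"
  shows "\<exists>b\<in>end_basis X LSS T. p \<in> b \<and> b \<subseteq> b1 \<inter> b2"
proof (cases p)
  case (Inl x)
  let ?b = "Inl ` (Inl -` b1 \<inter> Inl -` b2)"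
  have "openin T (Inl -` b1 \<inter> Inl -` b2)"
    using end_basis_Inl_vimage b1 b2 by blast
  then have "?b \<in> end_basis X LSS T"
    unfolding end_basis_eq by blast
  moreover have "p \<in> ?b \<and> ?b \<subseteq> b1 \<inter> b2"
    using p Inl by auto
  ultimately show ?thesis
    by (rule bexI[rotated])
next
  case (Inr E)
  with p have "Inr E \<in> b1" "Inr E \<in> b2"
    by auto
  then obtain U1 U2 where "openin T U1" "cc U1" "b1 = end_nbhd U1" "openin T U2" "cc U2" "b2 = end_nbhd U2"
    using end_basis_Inr_mem[OF b1] end_basis_Inr_mem[OF b2] by metis
  then have "end_nbhd (U1 \<inter> U2) = b1 \<inter> b2"
    by (simp add: end_nbhd_Int)
  moreover have "end_nbhd (U1 \<inter> U2) \<in> end_basis X LSS T"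
    unfolding end_basis_eq using \<open>openin T U1\<close> \<open>openin T U2\<close> \<open>cc U1\<close> \<open>cc U2\<close>
    by (blast intro: coarsely_clopen_Int)
  ultimately have "b1 \<inter> b2 \<in> end_basis X LSS T"
    by simp
  then show ?thesis
    by (rule bexI[rotated]) (use p in blast)
qed

lemma openin_Y_basic_nbhd:
  assumes "openin Y W" "p \<in> W"
  shows "\<exists>b\<in>end_basis X LSS T. p \<in> b \<and> b \<subseteq> W"
proof -
  have "generate_topology_on (end_basis X LSS T) W"
    using assms(1) unfolding T_end_def by (simp add: openin_topology_generated_by_iff)
  then show ?thesis
    using assms(2)
  proof (induction arbitrary: p)
    case (Int a b)
    then obtain b1 b2 where "b1 \<in> end_basis X LSS T" "p \<in> b1" "b1 \<subseteq> a"
      "b2 \<in> end_basis X LSS T" "p \<in> b2" "b2 \<subseteq> b"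
      by (meson IntE)
    then show ?case
      using end_basis_Int[of b1 b2 p] by blast
  next
    case (UN K)
    then obtain k where k: "k \<in> K" "p \<in> k"
      by blast
    then show ?case
      using UN.IH[OF k] by blast
  qed auto
qed

lemma openin_Y_Inl_nbhd:
  assumes "openin Y W" "Inl x \<in> W"
  obtains U where "openin T U" "x \<in> U" "Inl ` U \<subseteq> W"
proof -
  obtain b where b: "b \<in> end_basis X LSS T" "Inl x \<in> b" "b \<subseteq> W"
    using openin_Y_basic_nbhd[OF assms] by blast
  show thesis
    using that[of "Inl -` b"] end_basis_Inl_vimage[OF b(1)] b(2,3) by blast
qed

lemma openin_Y_Inr_nbhd:
  assumes "openin Y W" "Inr E \<in> W"
  obtains U where "openin T U" "cc U" "E \<in> Ends X LSS" "U \<in> E" "end_nbhd U \<subseteq> W"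
proof -
  obtain b where b: "b \<in> end_basis X LSS T" "Inr E \<in> b" "b \<subseteq> W"
    using openin_Y_basic_nbhd[OF assms] by blast
  show thesis
    using that end_basis_Inr_mem[OF b(1,2)] b(3) by metis
qed

lemma topspace_Y: "topspace Y = Inl ` X \<union> Inr ` Ends X LSS"
proof
  show "topspace Y \<subseteq> Inl ` X \<union> Inr ` Ends X LSS"
  proof
    fix p assume p: "p \<in> topspace Y"
    show "p \<in> Inl ` X \<union> Inr ` Ends X LSS"
    proof (cases p)
      case (Inl x)
      then obtain U where "openin T U" "x \<in> U"
        using openin_Y_Inl_nbhd[OF openin_topspace] p by metis
      then show ?thesis
        using Inl openin_subset_space by blast
    next
      case (Inr E)
      then show ?thesis
        using openin_Y_Inr_nbhd[OF openin_topspace] p by blast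
    qed
  qed
  have "openin T X"
    using topspace_eq by auto
  then have "Inl ` X \<union> end_nbhd X \<subseteq> topspace Y"
    using openin_Y_Inl_image openin_Y_end_nbhd coarsely_clopen_space openin_subset by blast
  moreover have "Inr ` Ends X LSS \<subseteq> end_nbhd X"
    unfolding end_nbhd_def using space_mem_end by blast
  ultimately show "Inl ` X \<union> Inr ` Ends X LSS \<subseteq> topspace Y"
    by blast
qed

lemma embedding_map_Inl: "embedding_map T Y Inl"
proof (rule injective_open_imp_embedding_map)
  show "continuous_map T Y Inl"
    unfolding continuous_map_def
  proof (intro conjI allI impI)
    show "Inl \<in> topspace T \<rightarrow> topspace Y"
      using topspace_Y topspace_eq by auto
    fix W assume W: "openin Y W"
    show "openin T {x \<in> topspace T. Inl x \<in> W}"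
    proof (subst openin_subopen, intro ballI)
      fix x assume "x \<in> {x \<in> topspace T. Inl x \<in> W}"
      then obtain U where "openin T U" "x \<in> U" "Inl ` U \<subseteq> W"
        using openin_Y_Inl_nbhd W by blast
      then show "\<exists>U. openin T U \<and> x \<in> U \<and> U \<subseteq> {x \<in> topspace T. Inl x \<in> W}"
        using openin_subset by blast
    qed
  qed
  show "open_map T Y Inl"
    unfolding open_map_def using openin_Y_Inl_image by simp
qed simp

lemma openin_Y_Inl_space: "openin Y (Inl ` X)"
  using openin_Y_Inl_image[OF openin_topspace] topspace_eq by simp

lemma closure_of_Inl_space: "Y closure_of (Inl ` X) = topspace Y"
proof (rule closure_of_subset_topspace[THEN antisym], rule subsetI)
  fix p assume p: "p \<in> topspace Y"
  show "p \<in> Y closure_of (Inl ` X)"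
  proof (cases p)
    case Inl
    have "Inl ` X \<subseteq> topspace Y"
      using topspace_Y by blast
    then have "Inl ` X \<subseteq> Y closure_of (Inl ` X)"
      by (rule closure_of_subset)
    moreover have "p \<in> Inl ` X"
      using p Inl topspace_Y by auto
    ultimately show ?thesis
      by blast
  next
    case (Inr E)
    show ?thesis
      unfolding in_closure_of
    proof (intro conjI allI impI)
      fix W assume "p \<in> W \<and> openin Y W"
      then obtain U where U: "openin T U" "E \<in> Ends X LSS" "U \<in> E" "end_nbhd U \<subseteq> W"
        using openin_Y_Inr_nbhd Inr by metis
      then obtain x where "x \<in> U"
        using end_mem_unbounded by fastforce
      then show "\<exists>y. y \<in> Inl ` X \<and> y \<in> W"
        using U(1,4) openin_subset_space unfolding end_nbhd_def by blast
    qed (rule p)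
  qed
qed

lemma ends_separated:
  assumes E: "E \<in> Ends X LSS" and E': "E' \<in> Ends X LSS" "E \<noteq> E'"
  obtains U V where "openin Y U" "openin Y V" "U \<inter> V = {}" "Inr E \<in> U" "Inr E' \<in> V"
    "Inr ` Ends X LSS \<subseteq> U \<union> V"
proof -
  have "\<not> E \<subseteq> E'"
    using E E' unfolding mem_Ends_iff is_end_def by blast
  then obtain A where "A \<in> E" "A \<notin> E'"
    by blast
  then have A: "cc A" and "X - A \<in> E'"
    using end_mem_coarsely_clopen end_mem_or_Diff_mem E E' by blast+
  obtain C where C: "bnd C" "openin T (A - C)" "openin T (X - A - C)"
    using coarsely_clopen_open_up_to_bounded[OF A] by blast
  have cc: "cc (A - C)" "cc (X - A - C)"
    using coarsely_clopen_Diff_bounded[OF _ C(1)] coarsely_clopen_Diff[OF A] A by blast+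
  have mem: "A - C \<in> F \<or> X - A - C \<in> F" if "F \<in> Ends X LSS" for F
    using end_mem_or_Diff_mem[OF that A] end_mem_bounded_change[OF that _ _ C(1)] cc by blast
  show thesis
  proof (rule that)
    show "openin Y (end_nbhd (A - C))" "openin Y (end_nbhd (X - A - C))"
      using openin_Y_end_nbhd C cc by blast+
    show "end_nbhd (A - C) \<inter> end_nbhd (X - A - C) = {}"
      using end_nbhd_disjoint cc by blast
    show "Inr E \<in> end_nbhd (A - C)" "Inr E' \<in> end_nbhd (X - A - C)"
      unfolding end_nbhd_def
      using end_mem_bounded_change[OF _ _ _ C(1)] cc E E' \<open>A \<in> E\<close> \<open>X - A \<in> E'\<close> by blast+
    show "Inr ` Ends X LSS \<subseteq> end_nbhd (A - C) \<union> end_nbhd (X - A - C)"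
      unfolding end_nbhd_def using mem by blast
  qed
qed

text \<open>A point is separated from an end by removing the closure of a bounded open
  neighbourhood of the point.\<close>

lemma point_end_separated:
  assumes x: "x \<in> X" and E: "E \<in> Ends X LSS"
  obtains U V where "openin Y U" "openin Y V" "Inl x \<in> U" "Inr E \<in> V" "disjnt U V"
proof -
  obtain \<U> where \<U>: "\<U> \<in> LSS" "\<forall>U\<in>\<U>. openin T U"
    using open_cover by blast
  have "x \<in> \<Union>\<U>"
    using x is_cover_LSS[OF \<U>(1)] unfolding is_cover_def by blast
  then obtain W where W: "W \<in> \<U>" "x \<in> W" "openin T W"
    using \<U>(2) by blast
  define C where "C = T closure_of W"
  have "bnd C"
    unfolding C_def using bounded_closure_of bounded_member \<U>(1) W(1) by blast
  have "closedin T C" "W \<subseteq> C"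
    unfolding C_def using closure_of_subset[OF openin_subset[OF W(3)]] by auto
  have "openin T (X - C)"
    using openin_diff[OF openin_topspace \<open>closedin T C\<close>] topspace_eq by simp
  moreover have "cc (X - C)"
    using coarsely_clopen_Diff_bounded[OF coarsely_clopen_space \<open>bnd C\<close>] .
  moreover have "X - C \<in> E"
    using end_mem_bounded_change[OF E space_mem_end[OF E] \<open>cc (X - C)\<close> \<open>bnd C\<close>] by blast
  ultimately show thesis
  proof (intro that[of "Inl ` W" "end_nbhd (X - C)"] openin_Y_Inl_image openin_Y_end_nbhd)
    show "disjnt (Inl ` W) (end_nbhd (X - C))"
      using \<open>W \<subseteq> C\<close> unfolding end_nbhd_def disjnt_def by auto
  qed (use W E in \<open>auto simp: end_nbhd_def\<close>)
qed

lemma Hausdorff_space_Y: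
  assumes "Hausdorff_space T"
  shows "Hausdorff_space Y"
  unfolding Hausdorff_space_def
proof (intro allI impI)
  fix p q assume pq: "p \<in> topspace Y \<and> q \<in> topspace Y \<and> p \<noteq> q"
  show "\<exists>U V. openin Y U \<and> openin Y V \<and> p \<in> U \<and> q \<in> V \<and> disjnt U V"
  proof (cases p; cases q)
    fix x y assume xy: "p = Inl x" "q = Inl y"
    then have "x \<in> topspace T" "y \<in> topspace T" "x \<noteq> y"
      using pq topspace_Y topspace_eq by auto
    then obtain U V where "openin T U" "openin T V" "x \<in> U" "y \<in> V" "disjnt U V"
      using assms unfolding Hausdorff_space_def by blast
    then show ?thesis
      using xy openin_Y_Inl_image unfolding disjnt_def by blast
  next
    fix x E assume xE: "p = Inl x" "q = Inr E"
    then have "x \<in> X" "E \<in> Ends X LSS"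
      using pq topspace_Y by auto
    then obtain U V where "openin Y U" "openin Y V" "Inl x \<in> U" "Inr E \<in> V" "disjnt U V"
      by (rule point_end_separated)
    with xE show ?thesis
      by blast
  next
    fix E y assume Ey: "p = Inr E" "q = Inl y"
    then have "y \<in> X" "E \<in> Ends X LSS"
      using pq topspace_Y by auto
    then obtain U V where "openin Y U" "openin Y V" "Inl y \<in> U" "Inr E \<in> V" "disjnt U V"
      by (rule point_end_separated)
    with Ey show ?thesis
      using disjnt_sym by blast
  next
    fix E E' assume EE': "p = Inr E" "q = Inr E'"
    then have "E \<in> Ends X LSS" "E' \<in> Ends X LSS" "E \<noteq> E'"
      using pq topspace_Y by auto
    then obtain U V where "openin Y U" "openin Y V" "U \<inter> V = {}" "Inr E \<in> U" "Inr E' \<in> V"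
      by (rule ends_separated)
    with EE' show ?thesis
      unfolding disjnt_def by blast
  qed
qed

lemma ends_cover_finite_subcover:
  assumes "\<forall>W\<in>\<W>. openin Y W" "Inr ` Ends X LSS \<subseteq> \<Union>\<W>"
  obtains \<F> where "\<F> \<subseteq> \<W>" "finite \<F>" "Inr ` Ends X LSS \<subseteq> \<Union>\<F>" "bnd {x \<in> X. Inl x \<notin> \<Union>\<F>}"
proof -
  have "\<exists>W\<in>\<W>. \<exists>U. cc U \<and> U \<in> E \<and> end_nbhd U \<subseteq> W" if "E \<in> Ends X LSS" for E
  proof -
    have "Inr E \<in> \<Union>\<W>"
      using assms(2) that by blast
    then obtain W where "W \<in> \<W>" "Inr E \<in> W"
      by blast
    then show ?thesis
      using openin_Y_Inr_nbhd assms(1) by metis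
  qed
  then obtain w u where wu: "\<And>E. E \<in> Ends X LSS \<Longrightarrow> w E \<in> \<W> \<and> cc (u E) \<and> u E \<in> E \<and> end_nbhd (u E) \<subseteq> w E"
    by metis
  then have "\<And>E. E \<in> Ends X LSS \<Longrightarrow> cc (u E) \<and> u E \<in> E"
    by blast
  then obtain S where S: "finite S" "S \<subseteq> Ends X LSS" "bnd (X - \<Union>(u ` S))"
    using ends_finite_cobounded_choice by blast
  show thesis
  proof (rule that[of "w ` S"])
    show "w ` S \<subseteq> \<W>" "finite (w ` S)"
      using wu S(1,2) by auto
    show "Inr ` Ends X LSS \<subseteq> \<Union>(w ` S)"
    proof
      fix p :: "'a + 'a set set" assume "p \<in> Inr ` Ends X LSS"
      then obtain E' where E': "E' \<in> Ends X LSS" "p = Inr E'"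
        by blast
      have "\<forall>A\<in>u ` S. cc A"
        using wu S(2) by blast
      then obtain E where "E \<in> S" "u E \<in> E'"
        using end_mem_of_cobounded_cover[OF E'(1) finite_imageI[OF S(1)]] S(3) by blast
      then show "p \<in> \<Union>(w ` S)"
        using wu[of E] S(2) E' unfolding end_nbhd_def by blast
    qed
    have "{x \<in> X. Inl x \<notin> \<Union>(w ` S)} \<subseteq> X - \<Union>(u ` S)"
      using wu S(2) unfolding end_nbhd_def by blast
    then show "bnd {x \<in> X. Inl x \<notin> \<Union>(w ` S)}"
      by (rule bounded_subset[OF S(3)])
  qed
qed

lemma ls_compact_Y: "ls_compact Y X LSS Inl"
  unfolding ls_compact_def
proof (intro allI impI)
  fix \<W> assume \<W>: "(\<forall>W\<in>\<W>. openin Y W) \<and> topspace Y \<subseteq> \<Union>\<W>"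
  then have "Inr ` Ends X LSS \<subseteq> \<Union>\<W>"
    unfolding topspace_Y by simp
  then obtain \<F> where \<F>: "\<F> \<subseteq> \<W>" "finite \<F>" "Inr ` Ends X LSS \<subseteq> \<Union>\<F>"
    "bnd {x \<in> X. Inl x \<notin> \<Union>\<F>}"
    by (rule ends_cover_finite_subcover[OF conjunct1[OF \<W>]])
  moreover have "topspace Y - \<Union>\<F> = Inl ` {x \<in> X. Inl x \<notin> \<Union>\<F>}"
    using \<F>(3) topspace_Y by auto
  ultimately show "\<exists>\<F>. \<F> \<subseteq> \<W> \<and> finite \<F> \<and> (\<exists>B. bnd B \<and> topspace Y - \<Union>\<F> = Inl ` B)"
    by blast
qed

lemma compactin_Ends: "compactin Y (Inr ` Ends X LSS)"
  unfolding compactin_def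
proof (intro conjI allI impI)
  show "Inr ` Ends X LSS \<subseteq> topspace Y"
    using topspace_Y by blast
  fix \<W> assume "(\<forall>W\<in>\<W>. openin Y W) \<and> Inr ` Ends X LSS \<subseteq> \<Union>\<W>"
  then show "\<exists>\<F>. finite \<F> \<and> \<F> \<subseteq> \<W> \<and> Inr ` Ends X LSS \<subseteq> \<Union>\<F>"
    using ends_cover_finite_subcover[of \<W>] by metis
qed

lemma totally_disconnected_Ends: "totally_disconnected_space (subtopology Y (Inr ` Ends X LSS))"
  unfolding totally_disconnected_space_def
proof (intro allI impI)
  fix S assume "connectedin (subtopology Y (Inr ` Ends X LSS)) S"
  then have S: "connectedin Y S" "S \<subseteq> Inr ` Ends X LSS"
    by (auto simp: connectedin_subtopology)
  show "\<exists>a. S \<subseteq> {a}"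
  proof (rule ccontr)
    assume not_sub: "\<nexists>a. S \<subseteq> {a}"
    then obtain p where "p \<in> S"
      by blast
    moreover from not_sub obtain q where "q \<in> S" "p \<noteq> q"
      by blast
    ultimately have "p \<in> S" "q \<in> S" "p \<noteq> q"
      by blast+
    moreover obtain E where "p = Inr E" "E \<in> Ends X LSS"
      using S(2) \<open>p \<in> S\<close> by blast
    moreover obtain E' where "q = Inr E'" "E' \<in> Ends X LSS"
      using S(2) \<open>q \<in> S\<close> by blast
    ultimately have E: "Inr E \<in> S" "Inr E' \<in> S" "E \<in> Ends X LSS" "E' \<in> Ends X LSS" "E \<noteq> E'"
      by auto
    obtain U V where UV: "openin Y U" "openin Y V" "U \<inter> V = {}" "Inr E \<in> U" "Inr E' \<in> V"
      "Inr ` Ends X LSS \<subseteq> U \<union> V"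
      using ends_separated[OF E(3-5)] by blast
    then have "S \<subseteq> U \<union> V" "U \<inter> V \<inter> S = {}" "U \<inter> S \<noteq> {}" "V \<inter> S \<noteq> {}"
      using S(2) E(1,2) by blast+
    then show False
      using S(1) UV(1,2) unfolding connectedin by blast
  qed
qed

end

theorem theorem2p23:
  fixes X :: "'a set" and LSS :: "'a set set set" and T :: "'a topology"
  assumes "top_large_scale_space X LSS T"
    and "Hausdorff_space T"
  shows "topspace (T_end X LSS T) = Inl ` X \<union> Inr ` Ends X LSS
    \<and> ls_compactification (T_end X LSS T) X LSS T Inl
    \<and> compactin (T_end X LSS T) (Inr ` Ends X LSS)
    \<and> totally_disconnected_space (subtopology (T_end X LSS T) (Inr ` Ends X LSS))"
proof -
  interpret top_ls_space X LSS T
    using assms(1) by (rule top_ls_spaceI)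
  show ?thesis
    unfolding ls_compactification_def
    using topspace_Y ls_compact_Y Hausdorff_space_Y[OF assms(2)] embedding_map_Inl
      openin_Y_Inl_space closure_of_Inl_space compactin_Ends totally_disconnected_Ends
    by blast
qed

end
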